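(* Let $(\mathcal{X},\rho,\nu)$ be a metric measure space with $\rho$ separable and $\nu$ a finite Borel measure. Let $c$ be a concept whose boundary $\partial\mathcal{X}$ satisfies $\nu(\partial\mathcal{X})=0$, and let the $\nu$-dominated adversary have smoothness rate $\epsilon$. Fix $p>0$. Then with probability at least $1-p$, the 1-nearest neighbor rule satisfies, simultaneously for all $T\in\mathbb{N}$, $$\#\mathrm{mistakes}_T\le\min\left\{T,\ \inf_{V\subset\mathcal{X}}\ \mathcal{N}_{\mathrm{ML}}(V)+T\,\epsilon\big(\nu(V^c)\big)+\sqrt{2T\log\frac{2T}{p}}\right\},$$ where the infimum is over measurable $V$.
   Context: Protocol: adversary fixes $c:\mathcal{X}\to\mathcal{Y}$; at each $t$ it picks a distribution $\mu_t$ (possibly history-dependent), draws $x_t\sim\mu_t$; the 1-nearest neighbor rule predicts $\hat y_t=c(x_{\mathrm{NN}_t})$ with $\mathrm{NN}_t\in\arg\min_{\tau<t}\rho(x_t,x_\tau)$ (ties arbitrary). $\#\mathrm{mistakes}_T=\sum_{t=1}^T\mathbb{1}\{\hat y_t\ne c(x_t)\}$. Margin $m_c(x)=\inf_{x':c(x')\neq c(x)}\rho(x,x')$; $\partial\mathcal{X}=\{x:m_c(x)=0\}$. A set $U$ is mutually-labeling if $\rho(x,x')<m_c(x)$ for all $x,x'\in U$; $\mathcal{N}_{\mathrm{ML}}(V)$ is the minimal number of mutually-labeling sets needed to cover $V$. An adversary has smoothness rate $\epsilon:\mathbb{R}_{\ge0}\to[0,1]$ if every distribution $\mu$ it can select satisfies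 $\mu(A)\le\epsilon(\nu(A))$ for all measurable $A$; it is $\nu$-dominated if moreover $\lim_{\delta\to0}\epsilon(\delta)=0$. *)

theory Defs
  imports "HOL-Probability.Probability"
begin

definition margin :: "('a::metric_space \<Rightarrow> 'b) \<Rightarrow> 'a \<Rightarrow> ereal" where
  "margin c x = Inf {ereal (dist x x') | x'. c x' \<noteq> c x}"

definition boundary :: "('a::metric_space \<Rightarrow> 'b) \<Rightarrow> 'a set" where
  "boundary c = {x. margin c x = 0}"

definition mutually_labeling :: "('a::metric_space \<Rightarrow> 'b) \<Rightarrow> 'a set \<Rightarrow> bool" where
  "mutually_labeling c U \<longleftrightarrow> (\<forall>x\<in>U. \<forall>x'\<in>U. ereal (dist x x') < margin c x)"

definition N_ML :: "('a::metric_space \<Rightarrow> 'b) \<Rightarrow> 'a set \<Rightarrow> enat" where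
  "N_ML c V = Inf {enat (card F) | F. finite F \<and> (\<forall>U\<in>F. mutually_labeling c U) \<and> V \<subseteq> \<Union>F}"

definition history :: "(nat \<Rightarrow> 'w \<Rightarrow> 'a) \<Rightarrow> nat \<Rightarrow> 'w \<Rightarrow> (nat \<Rightarrow> 'a)" where
  "history X t \<omega> = (\<lambda>i\<in>{..<t}. X i \<omega>)"

text \<open>Number of mistakes of 1-NN in rounds 0..T-1 (round 0 = the paper's round 1 has no
  previous point and is counted as a mistake).\<close>
definition mistakes ::
  "('a \<Rightarrow> 'b) \<Rightarrow> (nat \<Rightarrow> 'w \<Rightarrow> 'a) \<Rightarrow> (nat \<Rightarrow> 'w \<Rightarrow> nat) \<Rightarrow> nat \<Rightarrow> 'w \<Rightarrow> nat" where
  "mistakes c X nn T \<omega> = card {t. t < T \<and> (t = 0 \<or> c (X (nn t \<omega>) \<omega>) \<noteq> c (X t \<omega>))}"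

end

theory Submission
  imports Defs
begin

text \<open>Fix a measurable \<open>V\<close> and a finite cover of \<open>V\<close> by mutually-labeling sets. Once a point
  of such a set has been seen, every later point of it has a nearest neighbour at least as close
  and therefore of the same label, so each set costs at most one mistake. Hence the mistakes up to
  \<open>T\<close> are at most \<open>N\<^sub>M\<^sub>L(V)\<close> plus the number of rounds with \<open>x\<^sub>t \<notin> V\<close>. Given the past, \<open>x\<^sub>t \<notin> V\<close>
  has probability at most \<open>\<epsilon>(\<nu>(V\<^sup>c))\<close>, so that count obeys a Hoeffding bound and exceeds
  \<open>T \<epsilon>(\<nu>(V\<^sup>c)) + \<surd>(2T log(2T/p))\<close> with probability at most \<open>(p/2T)\<^sup>4\<close>.
  The infimum over uncountably many \<open>V\<close> costs nothing extra: the mistake count is an integer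
  \<open>n \<le> T\<close>, so for each \<open>T\<close> and each \<open>n\<close> above the infimum one \<open>V\<close> with bound below \<open>n\<close>
  suffices, and these \<open>T + 1\<close> bad events per round have total probability at most \<open>p\<close>.\<close>

lemma (in finite_measure) integral_nat_valued_mult_indicator:
  fixes Y :: "'a \<Rightarrow> nat" and g :: "nat \<Rightarrow> real"
  assumes level_sets: "\<And>k. {\<omega>\<in>space M. Y \<omega> = k} \<in> sets M"
    and bounded: "\<And>\<omega>. \<omega> \<in> space M \<Longrightarrow> Y \<omega> \<le> n"
    and D: "D \<in> sets M"
  shows "(\<integral>\<omega>. g (Y \<omega>) * indicator D \<omega> \<partial>M)
       = (\<Sum>k\<le>n. g k * measure M ({\<omega>\<in>space M. Y \<omega> = k} \<inter> D))"
proof -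
  have "g (Y \<omega>) * indicator D \<omega> = (\<Sum>k\<le>n. g k * indicator ({\<omega>\<in>space M. Y \<omega> = k} \<inter> D) \<omega>)"
    if "\<omega> \<in> space M" for \<omega>
  proof -
    have "(\<Sum>k\<le>n. g k * indicator ({\<omega>\<in>space M. Y \<omega> = k} \<inter> D) \<omega>)
        = (\<Sum>k\<le>n. if k = Y \<omega> then g k * indicator D \<omega> else 0)"
      using that by (intro sum.cong) (auto simp: indicator_def)
    then show ?thesis using bounded[OF that] by simp
  qed
  then have "(\<integral>\<omega>. g (Y \<omega>) * indicator D \<omega> \<partial>M)
      = (\<integral>\<omega>. (\<Sum>k\<le>n. g k * indicator ({\<omega>\<in>space M. Y \<omega> = k} \<inter> D) \<omega>) \<partial>M)"
    by (intro Bochner_Integration.integral_cong) auto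
  also have "\<dots> = (\<Sum>k\<le>n. g k * measure M ({\<omega>\<in>space M. Y \<omega> = k} \<inter> D))"
    using level_sets D by (subst Bochner_Integration.integral_sum) (auto simp: less_top[symmetric])
  finally show ?thesis .
qed

definition count_in :: "'a set \<Rightarrow> nat \<Rightarrow> (nat \<Rightarrow> 'a) \<Rightarrow> nat" where
  "count_in A t h = card {i. i < t \<and> h i \<in> A}"

lemma count_in_le: "count_in A t h \<le> t"
  unfolding count_in_def using card_mono[of "{..<t}" "{i. i < t \<and> h i \<in> A}"] by auto

lemma count_in_Suc: "count_in A (Suc t) h = count_in A t h + (if h t \<in> A then 1 else 0)"
proof -
  have "{i. i < Suc t \<and> h i \<in> A} = {i. i < t \<and> h i \<in> A} \<union> (if h t \<in> A then {t} else {})"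
    by (auto simp: less_Suc_eq)
  then show ?thesis unfolding count_in_def by (simp add: card_insert_if)
qed

lemma count_in_cong: "(\<And>i. i < t \<Longrightarrow> h i = h' i) \<Longrightarrow> count_in A t h = count_in A t h'"
  unfolding count_in_def by (metis (lifting))

lemma real_count_in: "real (count_in A t h) = (\<Sum>i<t. indicator A (h i))"
  by (induction t) (simp_all add: count_in_def[of A 0] count_in_Suc indicator_def)

lemma measurable_count_in [measurable]:
  assumes "A \<in> sets borel"
  shows "(\<lambda>h. real (count_in A t h)) \<in> borel_measurable (PiM {..<t} (\<lambda>_. borel))"
  unfolding real_count_in using assms by measurable

lemma measurable_history:
  "(\<And>t. X t \<in> measurable M N) \<Longrightarrow> history X t \<in> measurable M (PiM {..<t} (\<lambda>_. N))"
  unfolding history_def[abs_def] by (intro measurable_restrict) auto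

lemma count_in_history: "count_in A t (history X t \<omega>) = count_in A t (\<lambda>i. X i \<omega>)"
  by (rule count_in_cong) (simp add: history_def)

text \<open>Given the history, \<open>X t\<close> falls into \<open>A\<close> with conditional probability at most \<open>q\<close>;
  the number of such hits is then dominated by a binomial count with parameter \<open>q\<close>.\<close>
locale rare_hits = prob_space M for M :: "'w measure" +
  fixes X :: "nat \<Rightarrow> 'w \<Rightarrow> 'a::topological_space" and A :: "'a set" and q :: real
  assumes X_meas: "\<And>t. X t \<in> measurable M borel"
    and A_borel: "A \<in> sets borel"
    and q_nonneg: "0 \<le> q"
    and hit_prob_le: "\<And>t B. B \<in> sets (PiM {..<t} (\<lambda>_. borel)) \<Longrightarrow>
          prob {\<omega>\<in>space M. X t \<omega> \<in> A \<and> history X t \<omega> \<in> B}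
          \<le> q * prob {\<omega>\<in>space M. history X t \<omega> \<in> B}"
begin

definition hits :: "nat \<Rightarrow> 'w \<Rightarrow> nat" where
  "hits t \<omega> = count_in A t (\<lambda>i. X i \<omega>)"

lemma borel_measurable_hits [measurable]: "(\<lambda>\<omega>. real (hits t \<omega>)) \<in> borel_measurable M"
proof -
  have "(\<lambda>\<omega>. real (count_in A t (history X t \<omega>))) \<in> borel_measurable M"
    using measurable_compose[OF measurable_history[OF X_meas] measurable_count_in[OF A_borel]] .
  then show ?thesis by (simp add: hits_def count_in_history)
qed

lemma integrable_exp_hits:
  fixes l :: real
  shows "integrable M (\<lambda>\<omega>. exp (l * hits t \<omega>))"
proof (rule integrable_const_bound[where B = "exp (\<bar>l\<bar> * t)"])
  have "l * hits t \<omega> \<le> \<bar>l\<bar> * t" for \<omega>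
    by (intro mult_mono) (auto simp: hits_def count_in_le)
  then show "AE \<omega> in M. norm (exp (l * hits t \<omega>)) \<le> exp (\<bar>l\<bar> * t)"
    by simp
qed simp

lemma hits_level_set_history:
  obtains B where "B \<in> sets (PiM {..<t} (\<lambda>_. borel))"
    and "{\<omega>\<in>space M. hits t \<omega> = k} = {\<omega>\<in>space M. history X t \<omega> \<in> B}"
proof
  let ?B = "{h\<in>space (PiM {..<t} (\<lambda>_. borel)). real (count_in A t h) = real k}"
  show "?B \<in> sets (PiM {..<t} (\<lambda>_. borel))"
    using A_borel by measurable
  show "{\<omega>\<in>space M. hits t \<omega> = k} = {\<omega>\<in>space M. history X t \<omega> \<in> ?B}"
    using measurable_space[OF measurable_history[OF X_meas]]
    by (auto simp: hits_def count_in_history[symmetric])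
qed

lemma hits_level_set_in_events: "{\<omega>\<in>space M. hits t \<omega> = k} \<in> events"
proof -
  obtain B where B: "B \<in> sets (PiM {..<t} (\<lambda>_. borel))"
    and eq: "{\<omega>\<in>space M. hits t \<omega> = k} = {\<omega>\<in>space M. history X t \<omega> \<in> B}"
    by (rule hits_level_set_history)
  show ?thesis
    unfolding eq using measurable_sets[OF measurable_history[OF X_meas] B]
    by (simp add: vimage_def Int_def conj_commute)
qed

lemma hit_set_in_events: "{\<omega>\<in>space M. X t \<omega> \<in> A} \<in> events"
  using X_meas A_borel by measurable

lemma prob_hits_level_and_hit_le:
  "prob ({\<omega>\<in>space M. hits t \<omega> = k} \<inter> {\<omega>\<in>space M. X t \<omega> \<in> A})
   \<le> q * prob {\<omega>\<in>space M. hits t \<omega> = k}"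
proof -
  obtain B where B: "B \<in> sets (PiM {..<t} (\<lambda>_. borel))"
    and eq: "{\<omega>\<in>space M. hits t \<omega> = k} = {\<omega>\<in>space M. history X t \<omega> \<in> B}"
    by (rule hits_level_set_history)
  have "{\<omega>\<in>space M. history X t \<omega> \<in> B} \<inter> {\<omega>\<in>space M. X t \<omega> \<in> A}
      = {\<omega>\<in>space M. X t \<omega> \<in> A \<and> history X t \<omega> \<in> B}"
    by blast
  then show ?thesis
    unfolding eq using hit_prob_le[OF B] by simp
qed

lemma hits_Suc: "hits (Suc t) \<omega> = hits t \<omega> + (if X t \<omega> \<in> A then 1 else 0)"
  by (simp add: hits_def count_in_Suc)

lemma integral_exp_hits_indicator:
  fixes l :: real
  assumes "D \<in> events"
  shows "expectation (\<lambda>\<omega>. exp (l * hits t \<omega>) * indicator D \<omega>)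
         = (\<Sum>k\<le>t. exp (l * k) * prob ({\<omega>\<in>space M. hits t \<omega> = k} \<inter> D))"
  using assms hits_level_set_in_events
  by (intro integral_nat_valued_mult_indicator[where g = "\<lambda>k. exp (l * k)"])
    (auto simp: hits_def count_in_le)

lemma mgf_hits_eq_sum:
  fixes l :: real
  shows "expectation (\<lambda>\<omega>. exp (l * hits t \<omega>)) = (\<Sum>k\<le>t. exp (l * k) * prob {\<omega>\<in>space M. hits t \<omega> = k})"
proof -
  have "expectation (\<lambda>\<omega>. exp (l * hits t \<omega>))
      = expectation (\<lambda>\<omega>. exp (l * hits t \<omega>) * indicator (space M) \<omega>)"
    by (intro Bochner_Integration.integral_cong) auto
  then show ?thesis
    using integral_exp_hits_indicator[of "space M" l t]
    by (simp add: Int_absorb2 sets.sets_into_space hits_level_set_in_events)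
qed

text \<open>Since \<open>hits t\<close> is a function of the history, conditioning on its value and then on the
  event \<open>X t \<in> A\<close> gives the factor \<open>1 + q (e\<^sup>l - 1)\<close>, as for one Bernoulli trial.\<close>
lemma mgf_hits_Suc_le:
  fixes l :: real
  assumes "0 \<le> l"
  shows "expectation (\<lambda>\<omega>. exp (l * hits (Suc t) \<omega>))
         \<le> (1 + q * (exp l - 1)) * expectation (\<lambda>\<omega>. exp (l * hits t \<omega>))"
proof -
  let ?L = "\<lambda>k. {\<omega>\<in>space M. hits t \<omega> = k}" and ?H = "{\<omega>\<in>space M. X t \<omega> \<in> A}"
  have "exp (l * hits (Suc t) \<omega>)
      = exp (l * hits t \<omega>) + (exp l - 1) * (exp (l * hits t \<omega>) * indicator ?H \<omega>)"
    if "\<omega> \<in> space M" for \<omega>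
    using that by (auto simp: hits_Suc indicator_def exp_add algebra_simps)
  then have "expectation (\<lambda>\<omega>. exp (l * hits (Suc t) \<omega>))
      = expectation (\<lambda>\<omega>. exp (l * hits t \<omega>) + (exp l - 1) * (exp (l * hits t \<omega>) * indicator ?H \<omega>))"
    by (intro Bochner_Integration.integral_cong) auto
  also have "\<dots> = expectation (\<lambda>\<omega>. exp (l * hits t \<omega>))
      + (exp l - 1) * expectation (\<lambda>\<omega>. exp (l * hits t \<omega>) * indicator ?H \<omega>)"
    using hit_set_in_events
    by (subst Bochner_Integration.integral_add)
       (auto intro!: integrable_real_mult_indicator integrable_exp_hits)
  also have "\<dots> = (\<Sum>k\<le>t. exp (l * k) * prob (?L k))
      + (exp l - 1) * (\<Sum>k\<le>t. exp (l * k) * prob (?L k \<inter> ?H))"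
    by (simp add: mgf_hits_eq_sum integral_exp_hits_indicator[OF hit_set_in_events])
  also have "\<dots> \<le> (\<Sum>k\<le>t. exp (l * k) * prob (?L k))
      + (exp l - 1) * (\<Sum>k\<le>t. exp (l * k) * (q * prob (?L k)))"
    using assms prob_hits_level_and_hit_le
    by (intro add_left_mono mult_left_mono sum_mono) auto
  also have "\<dots> = (1 + q * (exp l - 1)) * (\<Sum>k\<le>t. exp (l * k) * prob (?L k))"
    by (simp only: mult.left_commute[of _ q] sum_distrib_left[symmetric]) (simp add: algebra_simps)
  finally show ?thesis
    by (simp only: mgf_hits_eq_sum)
qed

lemma mgf_hits_le:
  fixes l :: real
  assumes "0 \<le> l"
  shows "expectation (\<lambda>\<omega>. exp (l * hits t \<omega>)) \<le> (1 + q * (exp l - 1)) ^ t"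
proof (induction t)
  case 0
  then show ?case by (simp add: hits_def count_in_def prob_space)
next
  case (Suc t)
  have "0 \<le> 1 + q * (exp l - 1)"
    using q_nonneg assms by simp
  then show ?case
    using mgf_hits_Suc_le[OF assms, of t] mult_left_mono[OF Suc] by (simp add: order_trans)
qed

lemma chernoff_bound_hits:
  fixes a l :: real
  assumes "0 \<le> l"
  shows "prob {\<omega>\<in>space M. a \<le> hits t \<omega>} \<le> (1 + q * (exp l - 1)) ^ t / exp (l * a)"
proof -
  have "prob {\<omega>\<in>space M. a \<le> hits t \<omega>} \<le> prob {\<omega>\<in>space M. exp (l * a) \<le> exp (l * hits t \<omega>)}"
    using assms by (intro finite_measure_mono) (auto intro: mult_left_mono)
  also have "\<dots> \<le> expectation (\<lambda>\<omega>. exp (l * hits t \<omega>)) / exp (l * a)"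
    by (intro integral_Markov_inequality_measure[where A = "space M"] integrable_exp_hits) auto
  also have "\<dots> \<le> (1 + q * (exp l - 1)) ^ t / exp (l * a)"
    by (intro divide_right_mono mgf_hits_le assms) simp
  finally show ?thesis .
qed

text \<open>The choice \<open>l = 4 s / t\<close> optimises the Chernoff bound after
  Hoeffding's lemma \<open>1 + q (e\<^sup>l - 1) \<le> exp (l q + l\<^sup>2 / 8)\<close>.\<close>
lemma hoeffding_bound_hits:
  assumes "0 < t" "0 \<le> s"
  shows "prob {\<omega>\<in>space M. t * q + s \<le> hits t \<omega>} \<le> exp (- 2 * s\<^sup>2 / t)"
proof -
  define l where "l = 4 * s / t"
  have l: "0 \<le> l"
    using assms by (simp add: l_def)
  have pos: "0 < 1 + q * (exp l - 1)"
    using q_nonneg l by (simp add: add_pos_nonneg)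
  have "ln (1 + q * (exp l - 1)) \<le> l * q + l\<^sup>2 / 8"
    using Hoeffdings_lemma_aux[OF l q_nonneg] by simp
  then have hoeffding: "1 + q * (exp l - 1) \<le> exp (l * q + l\<^sup>2 / 8)"
    using pos by (metis exp_le_cancel_iff exp_ln)
  have "prob {\<omega>\<in>space M. t * q + s \<le> hits t \<omega>} \<le> (1 + q * (exp l - 1)) ^ t / exp (l * (t * q + s))"
    by (rule chernoff_bound_hits[OF l])
  also have "\<dots> \<le> exp (l * q + l\<^sup>2 / 8) ^ t / exp (l * (t * q + s))"
    using hoeffding pos by (intro divide_right_mono power_mono) auto
  also have "\<dots> = exp (t * (l * q + l\<^sup>2 / 8) - l * (t * q + s))"
    by (simp add: exp_of_nat_mult[symmetric] exp_diff)
  also have "t * (l * q + l\<^sup>2 / 8) - l * (t * q + s) = - 2 * s\<^sup>2 / t"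
    using assms by (simp add: l_def field_simps power2_eq_square)
  finally show ?thesis .
qed

end

lemma mutually_labeling_closer_point_same_label:
  assumes "mutually_labeling c U" "x \<in> U" "y \<in> U" "dist x z \<le> dist x y"
  shows "c z = c x"
proof (rule ccontr)
  assume "c z \<noteq> c x"
  then have "margin c x \<le> ereal (dist x z)"
    unfolding margin_def by (intro Inf_lower) blast
  moreover have "ereal (dist x y) < margin c x"
    using assms(1-3) unfolding mutually_labeling_def by blast
  ultimately show False
    using assms(4) by (meson ereal_less_eq(3) leD order.trans)
qed

lemma mistakes_le: "mistakes c X nn T \<omega> \<le> T"
  unfolding mistakes_def
  using card_mono[of "{..<T}" "{t. t < T \<and> (t = 0 \<or> c (X (nn t \<omega>) \<omega>) \<noteq> c (X t \<omega>))}"] by auto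

lemma nn_label_correct_after_visit:
  fixes X :: "nat \<Rightarrow> 'w \<Rightarrow> 'a::metric_space"
  assumes nn: "\<forall>\<tau><t'. dist (X t' \<omega>) (X (nn t' \<omega>) \<omega>) \<le> dist (X t' \<omega>) (X \<tau> \<omega>)"
    and U: "mutually_labeling c U" "X t \<omega> \<in> U" "X t' \<omega> \<in> U" and "t < t'"
  shows "c (X (nn t' \<omega>) \<omega>) = c (X t' \<omega>)"
  using U nn \<open>t < t'\<close> by (intro mutually_labeling_closer_point_same_label[of c U _ "X t \<omega>"]) auto

lemma mistakes_le_card_cover:
  fixes X :: "nat \<Rightarrow> 'w \<Rightarrow> 'a::metric_space"
  assumes nn: "\<And>t. 0 < t \<Longrightarrow> nn t \<omega> < t \<and> (\<forall>\<tau><t. dist (X t \<omega>) (X (nn t \<omega>) \<omega>) \<le> dist (X t \<omega>) (X \<tau> \<omega>))"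
    and F: "finite F" "\<forall>U\<in>F. mutually_labeling c U" "V \<subseteq> \<Union>F"
  shows "mistakes c X nn T \<omega> \<le> card F + count_in (UNIV - V) T (\<lambda>i. X i \<omega>)"
proof -
  define wrong where "wrong = {t. t < T \<and> (t = 0 \<or> c (X (nn t \<omega>) \<omega>) \<noteq> c (X t \<omega>))}"
  define inside where "inside = {t\<in>wrong. X t \<omega> \<in> V}"
  define cell where "cell t = (SOME U. U \<in> F \<and> X t \<omega> \<in> U)" for t
  have cell: "cell t \<in> F \<and> X t \<omega> \<in> cell t" if "t \<in> inside" for t
  proof -
    have "\<exists>U. U \<in> F \<and> X t \<omega> \<in> U"
      using that F(3) unfolding inside_def by blast
    then show ?thesis
      unfolding cell_def by (rule someI_ex)
  qed
  have cells_differ: "cell t \<noteq> cell t'" if "t \<in> inside" "t' \<in> inside" "t < t'" for t t'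
  proof
    assume "cell t = cell t'"
    then have "X t \<omega> \<in> cell t'" "X t' \<omega> \<in> cell t'" "mutually_labeling c (cell t')"
      using cell[OF that(1)] cell[OF that(2)] F(2) by auto
    moreover have "0 < t'"
      using that(3) by simp
    ultimately have "c (X (nn t' \<omega>) \<omega>) = c (X t' \<omega>)"
      using nn that(3) by (intro nn_label_correct_after_visit[where U = "cell t'"]) blast+
    then show False
      using that(2) \<open>0 < t'\<close> unfolding inside_def wrong_def by simp
  qed
  have "inj_on cell inside"
  proof (rule inj_onI)
    fix t t' assume "t \<in> inside" "t' \<in> inside" "cell t = cell t'"
    then show "t = t'"
      using cells_differ by (cases t t' rule: linorder_cases) auto
  qed
  then have "card inside \<le> card F"
    using cell F(1) by (intro card_inj_on_le) auto
  moreover have "card (wrong - inside) \<le> count_in (UNIV - V) T (\<lambda>i. X i \<omega>)"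
    unfolding count_in_def inside_def wrong_def by (intro card_mono) auto
  moreover have "card wrong \<le> card inside + card (wrong - inside)"
    using card_Un_le[of inside "wrong - inside"] by (simp add: Un_absorb1 inside_def)
  ultimately show ?thesis
    unfolding mistakes_def wrong_def by linarith
qed

lemma N_ML_attained:
  assumes "N_ML c V \<noteq> \<infinity>"
  obtains F where "finite F" "\<forall>U\<in>F. mutually_labeling c U" "V \<subseteq> \<Union>F" "N_ML c V = card F"
proof -
  define S where "S = {enat (card F) | F. finite F \<and> (\<forall>U\<in>F. mutually_labeling c U) \<and> V \<subseteq> \<Union>F}"
  have N_ML: "N_ML c V = Inf S"
    unfolding N_ML_def S_def ..
  have "S \<noteq> {}"
    using assms unfolding N_ML by (intro notI) (simp add: top_enat_def)
  then obtain x where "x \<in> S"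
    by blast
  then have "N_ML c V \<in> S"
    unfolding N_ML by (rule wellorder_InfI)
  then show ?thesis
    using that unfolding S_def by blast
qed

lemma mistakes_le_N_ML:
  fixes X :: "nat \<Rightarrow> 'w \<Rightarrow> 'a::metric_space"
  assumes "\<And>t. 0 < t \<Longrightarrow> nn t \<omega> < t \<and> (\<forall>\<tau><t. dist (X t \<omega>) (X (nn t \<omega>) \<omega>) \<le> dist (X t \<omega>) (X \<tau> \<omega>))"
  shows "ennreal (mistakes c X nn T \<omega>)
         \<le> ennreal_of_enat (N_ML c V) + ennreal (count_in (UNIV - V) T (\<lambda>i. X i \<omega>))"
proof (cases "N_ML c V = \<infinity>")
  case False
  then obtain F where F: "finite F" "\<forall>U\<in>F. mutually_labeling c U" "V \<subseteq> \<Union>F" "N_ML c V = card F"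
    by (rule N_ML_attained)
  have "ennreal (mistakes c X nn T \<omega>) \<le> ennreal (card F + count_in (UNIV - V) T (\<lambda>i. X i \<omega>))"
    using mistakes_le_card_cover[where X = X and nn = nn and \<omega> = \<omega>, OF assms F(1-3)] by (intro ennreal_leI of_nat_mono)
  then show ?thesis
    using F(4) by (simp add: ennreal_of_nat_eq_real_of_nat)
qed simp

lemma exp_neg_sq_sqrt_log:
  assumes "0 < p" "p \<le> 2 * T" "0 < T"
  shows "exp (- 2 * (sqrt (2 * T * ln (2 * T / p)))\<^sup>2 / T) = (p / (2 * T)) ^ 4"
proof -
  have "0 \<le> ln (2 * T / p)"
    using assms by simp
  then have "- 2 * (sqrt (2 * T * ln (2 * T / p)))\<^sup>2 / T = - ln ((2 * T / p) ^ 4)"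
    using assms by (simp add: ln_realpow)
  then show ?thesis
    using assms by (simp add: exp_minus power_divide)
qed

lemma plus_one_times_pow4_le_telescoping:
  fixes T p :: real
  assumes "1 \<le> T" "0 \<le> p" "p \<le> 1"
  shows "(T + 1) * (p / (2 * T)) ^ 4 \<le> p / T - p / (T + 1)"
proof -
  have "p ^ 4 \<le> p"
    using assms power_decreasing[of 1 4 p] by simp
  moreover have "(T + 1)\<^sup>2 \<le> 16 * T ^ 3"
  proof -
    have "(T + 1)\<^sup>2 \<le> (2 * T)\<^sup>2"
      using assms by (intro power_mono) auto
    also have "\<dots> \<le> 16 * T ^ 3"
      using assms by (simp add: power2_eq_square power3_eq_cube)
    finally show ?thesis .
  qed
  ultimately have "(T + 1)\<^sup>2 * p ^ 4 \<le> p * (16 * T ^ 3)"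
    using assms by (simp add: mult_mono mult.commute)
  then have "(T + 1)\<^sup>2 * p ^ 4 / (16 * T ^ 3) / (T * (T + 1)) \<le> p / (T * (T + 1))"
    using assms by (intro divide_right_mono) (auto simp: pos_divide_le_eq)
  moreover have "(T + 1) * (p / (2 * T)) ^ 4 = (T + 1)\<^sup>2 * p ^ 4 / (16 * T ^ 3) / (T * (T + 1))"
    by (simp add: power_divide power2_eq_square power3_eq_cube power4_eq_xxxx)
  moreover have "p / (T * (T + 1)) = p / T - p / (T + 1)"
    using assms by (simp add: field_simps)
  ultimately show ?thesis
    by simp
qed

text \<open>The \<open>T + 1\<close> events of level \<open>T\<close> cost at most \<open>p/T - p/(T + 1)\<close>, which telescopes to \<open>p\<close>.\<close>
lemma (in prob_space) prob_UN_triangle_le: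
  fixes B :: "nat \<Rightarrow> nat \<Rightarrow> 'a set" and p :: real
  assumes p: "0 < p" "p < 1"
    and B: "\<And>T n. 0 < T \<Longrightarrow> B T n \<in> events" "\<And>T n. 0 < T \<Longrightarrow> prob (B T n) \<le> (p / (2 * T)) ^ 4"
  shows "prob (\<Union>T\<in>{0<..}. \<Union>n\<le>T. B T n) \<le> p"
proof -
  define C where "C k = (\<Union>n\<le>Suc k. B (Suc k) n)" for k
  have C_events: "C k \<in> events" for k
    using B(1) unfolding C_def by auto
  have C_le: "prob (C k) \<le> p / Suc k - p / Suc (Suc k)" for k
  proof -
    have "prob (C k) \<le> (\<Sum>n\<le>Suc k. prob (B (Suc k) n))"
      unfolding C_def using B(1) by (intro finite_measure_subadditive_finite) auto
    also have "\<dots> \<le> (\<Sum>n\<le>Suc k. (p / (2 * Suc k)) ^ 4)"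
      using B(2) by (intro sum_mono) blast
    also have "\<dots> = (Suc k + 1) * (p / (2 * Suc k)) ^ 4"
      by simp
    also have "\<dots> \<le> p / Suc k - p / Suc (Suc k)"
      using plus_one_times_pow4_le_telescoping[of "Suc k" p] p by simp
    finally show ?thesis .
  qed
  have telescope: "(\<lambda>k. p / Suc k - p / Suc (Suc k)) sums p"
    using telescope_sums'[OF LIMSEQ_Suc[OF lim_const_over_n[of p]]] by simp
  have summable_C: "summable (\<lambda>k. prob (C k))"
    using C_le by (intro summable_comparison_test'[OF sums_summable[OF telescope], where N = 0]) simp
  have "{0<..} = range Suc"
    using gr0_conv_Suc by auto
  then have "(\<Union>T\<in>{0<..}. \<Union>n\<le>T. B T n) = (\<Union>k. C k)"
    unfolding C_def by simp
  also have "prob (\<Union>k. C k) \<le> (\<Sum>k. prob (C k))"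
    using C_events summable_C by (intro finite_measure_subadditive_countably) auto
  also have "\<dots> \<le> (\<Sum>k. p / Suc k - p / Suc (Suc k))"
    using C_le summable_C sums_summable[OF telescope] by (rule suminf_le)
  also have "\<dots> = p"
    using telescope by (rule sums_unique[symmetric])
  finally show ?thesis .
qed

text \<open>\<open>K t h\<close> is the distribution \<open>\<mu>\<^sub>t\<close> that the adversary chooses after the history \<open>h\<close>
  of the first \<open>t\<close> points; \<open>X_law\<close> says that \<open>X t\<close> is drawn from it.\<close>
locale smooth_adversary = prob_space M for M :: "'w measure" +
  fixes \<nu> :: "'a::metric_space measure" and \<epsilon> :: "real \<Rightarrow> real"
    and X :: "nat \<Rightarrow> 'w \<Rightarrow> 'a" and K :: "nat \<Rightarrow> (nat \<Rightarrow> 'a) \<Rightarrow> 'a measure"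
  assumes eps_nonneg: "\<And>\<delta>. 0 \<le> \<delta> \<Longrightarrow> 0 \<le> \<epsilon> \<delta>"
    and X_meas: "\<And>t. X t \<in> measurable M borel"
    and K_smooth: "\<And>t h A. h \<in> space (PiM {..<t} (\<lambda>_. borel)) \<Longrightarrow> A \<in> sets borel \<Longrightarrow>
                      measure (K t h) A \<le> \<epsilon> (measure \<nu> A)"
    and X_law: "\<And>t A B. A \<in> sets borel \<Longrightarrow> B \<in> sets (PiM {..<t} (\<lambda>_. borel)) \<Longrightarrow>
                   prob {\<omega> \<in> space M. X t \<omega> \<in> A \<and> history X t \<omega> \<in> B}
                   = (\<integral>\<omega>. indicator B (history X t \<omega>) * measure (K t (history X t \<omega>)) A \<partial>M)"
begin

lemma prob_hit_given_history_le:
  assumes A: "A \<in> sets borel" and B: "B \<in> sets (PiM {..<t} (\<lambda>_. borel))"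
  shows "prob {\<omega>\<in>space M. X t \<omega> \<in> A \<and> history X t \<omega> \<in> B}
         \<le> \<epsilon> (measure \<nu> A) * prob {\<omega>\<in>space M. history X t \<omega> \<in> B}"
proof -
  let ?H = "{\<omega>\<in>space M. history X t \<omega> \<in> B}"
  have H: "?H \<in> events"
    using measurable_sets[OF measurable_history[OF X_meas] B] by (simp add: vimage_def Int_def conj_commute)
  have "prob {\<omega>\<in>space M. X t \<omega> \<in> A \<and> history X t \<omega> \<in> B}
      = (\<integral>\<omega>. indicator B (history X t \<omega>) * measure (K t (history X t \<omega>)) A \<partial>M)"
    by (rule X_law[OF A B])
  also have "\<dots> \<le> (\<integral>\<omega>. \<epsilon> (measure \<nu> A) * indicator ?H \<omega> \<partial>M)"
  proof (rule integral_mono')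
    show "integrable M (\<lambda>\<omega>. \<epsilon> (measure \<nu> A) * indicator ?H \<omega>)"
      using H by (intro integrable_mult_right integrable_real_indicator) (simp_all add: less_top[symmetric])
    show "indicator B (history X t \<omega>) * measure (K t (history X t \<omega>)) A
          \<le> \<epsilon> (measure \<nu> A) * indicator ?H \<omega>" if "\<omega> \<in> space M" for \<omega>
      using K_smooth[OF measurable_space[OF measurable_history[OF X_meas] that] A] that
      by (simp add: indicator_def)
    show "0 \<le> \<epsilon> (measure \<nu> A) * indicator ?H \<omega>" for \<omega>
      using eps_nonneg[OF measure_nonneg[of \<nu> A]] by simp
  qed
  also have "\<dots> = \<epsilon> (measure \<nu> A) * prob ?H"
    using H by (simp add: Int_absorb2 sets.sets_into_space)
  finally show ?thesis .
qed

lemma rare_hits_outside: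
  assumes "V \<in> sets borel"
  shows "rare_hits M X (UNIV - V) (\<epsilon> (measure \<nu> (UNIV - V)))"
proof (rule rare_hits.intro[OF prob_space_axioms], intro rare_hits_axioms.intro)
  show "UNIV - V \<in> sets borel"
    using assms by simp
  show "0 \<le> \<epsilon> (measure \<nu> (UNIV - V))"
    by (rule eps_nonneg[OF measure_nonneg])
  show "X t \<in> borel_measurable M" for t
    by (rule X_meas)
  show "prob {\<omega>\<in>space M. X t \<omega> \<in> UNIV - V \<and> history X t \<omega> \<in> B}
        \<le> \<epsilon> (measure \<nu> (UNIV - V)) * prob {\<omega>\<in>space M. history X t \<omega> \<in> B}"
    if "B \<in> sets (PiM {..<t} (\<lambda>_. borel))" for t B
    using assms that by (intro prob_hit_given_history_le) auto
qed

lemma escape_tail: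
  assumes V: "V \<in> sets borel" and T: "0 < T" and p: "0 < p" "p < 1"
  defines "escape \<equiv> {\<omega>\<in>space M. T * \<epsilon> (measure \<nu> (UNIV - V)) + sqrt (2 * real T * ln (2 * real T / p))
                                 \<le> count_in (UNIV - V) T (\<lambda>i. X i \<omega>)}"
  shows "escape \<in> events" "prob escape \<le> (p / (2 * real T)) ^ 4"
proof -
  interpret rare_hits M X "UNIV - V" "\<epsilon> (measure \<nu> (UNIV - V))"
    using V by (rule rare_hits_outside)
  show "escape \<in> events"
    unfolding escape_def hits_def[symmetric] by measurable
  have "0 \<le> ln (2 * real T / p)"
    using T p by simp
  then have "prob escape \<le> exp (- 2 * (sqrt (2 * real T * ln (2 * real T / p)))\<^sup>2 / T)"
    unfolding escape_def hits_def[symmetric] using T by (intro hoeffding_bound_hits) auto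
  also have "\<dots> = (p / (2 * real T)) ^ 4"
    using T p by (intro exp_neg_sq_sqrt_log) auto
  finally show "prob escape \<le> (p / (2 * real T)) ^ 4" .
qed

definition mistake_bound :: "('a \<Rightarrow> 'b) \<Rightarrow> real \<Rightarrow> nat \<Rightarrow> ennreal" where
  "mistake_bound c p T = (INF V\<in>sets borel. ennreal_of_enat (N_ML c V)
      + ennreal (real T * \<epsilon> (measure \<nu> (UNIV - V)))
      + ennreal (sqrt (2 * real T * ln (2 * real T / p))))"

lemma event_excluding_mistake_count:
  fixes c :: "'a \<Rightarrow> 'b"
  assumes nn_NN: "\<And>t \<omega>. 0 < t \<Longrightarrow> \<omega> \<in> space M \<Longrightarrow>
                   nn t \<omega> < t \<and> (\<forall>\<tau><t. dist (X t \<omega>) (X (nn t \<omega>) \<omega>) \<le> dist (X t \<omega>) (X \<tau> \<omega>))"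
    and T: "0 < T" and p: "0 < p" "p < 1"
  shows "\<exists>B\<in>events. prob B \<le> (p / (2 * T)) ^ 4 \<and>
           (\<forall>\<omega>\<in>space M - B. mistake_bound c p T < n \<longrightarrow> mistakes c X nn T \<omega> \<noteq> n)"
proof (cases "mistake_bound c p T < n")
  case True
  define s where "s = sqrt (2 * real T * ln (2 * real T / p))"
  define q where "q V = \<epsilon> (measure \<nu> (UNIV - V))" for V
  obtain V where V: "V \<in> sets borel"
    and bound: "ennreal_of_enat (N_ML c V) + ennreal (T * q V) + ennreal s < n"
    using True unfolding mistake_bound_def s_def q_def by (auto simp: INF_less_iff)
  let ?B = "{\<omega>\<in>space M. T * q V + s \<le> count_in (UNIV - V) T (\<lambda>i. X i \<omega>)}"
  have "mistakes c X nn T \<omega> \<noteq> n" if \<omega>: "\<omega> \<in> space M - ?B" for \<omega>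
  proof -
    have "0 \<le> s"
      using T p by (simp add: s_def)
    have "0 \<le> T * q V"
      using eps_nonneg[OF measure_nonneg[of \<nu> "UNIV - V"]] by (simp add: q_def)
    have "ennreal (mistakes c X nn T \<omega>)
        \<le> ennreal_of_enat (N_ML c V) + ennreal (count_in (UNIV - V) T (\<lambda>i. X i \<omega>))"
      using \<omega> nn_NN by (intro mistakes_le_N_ML) auto
    also have "\<dots> \<le> ennreal_of_enat (N_ML c V) + ennreal (T * q V + s)"
      using \<omega> by (intro add_left_mono ennreal_leI) auto
    also have "\<dots> < n"
      using bound \<open>0 \<le> s\<close> \<open>0 \<le> T * q V\<close> by (simp add: add.assoc)
    finally show ?thesis
      by (auto simp: ennreal_of_nat_eq_real_of_nat)
  qed
  then show ?thesis
    using escape_tail[OF V T p] unfolding s_def q_def by blast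
qed (intro bexI[of _ "{}"], auto)

lemma events_excluding_mistake_counts:
  fixes c :: "'a \<Rightarrow> 'b"
  assumes nn_NN: "\<And>t \<omega>. 0 < t \<Longrightarrow> \<omega> \<in> space M \<Longrightarrow>
                   nn t \<omega> < t \<and> (\<forall>\<tau><t. dist (X t \<omega>) (X (nn t \<omega>) \<omega>) \<le> dist (X t \<omega>) (X \<tau> \<omega>))"
    and p: "0 < p" "p < 1"
  obtains B where
    "\<And>T n. 0 < T \<Longrightarrow> B T n \<in> events"
    "\<And>T n. 0 < T \<Longrightarrow> prob (B T n) \<le> (p / (2 * real T)) ^ 4"
    "\<And>T n \<omega>. 0 < T \<Longrightarrow> \<omega> \<in> space M - B T n \<Longrightarrow> mistake_bound c p T < n \<Longrightarrow>
       mistakes c X nn T \<omega> \<noteq> n"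
proof -
  define good_for where "good_for T n B \<longleftrightarrow> B \<in> events \<and> prob B \<le> (p / (2 * real T)) ^ 4 \<and>
      (\<forall>\<omega>\<in>space M - B. mistake_bound c p T < n \<longrightarrow> mistakes c X nn T \<omega> \<noteq> n)" for T n B
  have "\<exists>B. good_for T n B" if "0 < T" for T n
    using event_excluding_mistake_count[OF nn_NN that p] unfolding good_for_def by blast
  then obtain B where "good_for T n (B T n)" if "0 < T" for T n
    by metis
  then show ?thesis
    using that unfolding good_for_def by blast
qed

theorem nn_mistake_bound:
  fixes c :: "'a \<Rightarrow> 'b"
  assumes nn_NN: "\<And>t \<omega>. 0 < t \<Longrightarrow> \<omega> \<in> space M \<Longrightarrow>
                   nn t \<omega> < t \<and> (\<forall>\<tau><t. dist (X t \<omega>) (X (nn t \<omega>) \<omega>) \<le> dist (X t \<omega>) (X \<tau> \<omega>))"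
    and p: "0 < p"
  shows "\<exists>E\<in>events. 1 - p \<le> prob E \<and>
           (\<forall>\<omega>\<in>E. \<forall>T. ennreal (mistakes c X nn T \<omega>) \<le> min (ennreal T) (mistake_bound c p T))"
proof (cases "p < 1")
  case True
  obtain B where B: "\<And>T n. 0 < T \<Longrightarrow> B T n \<in> events"
      "\<And>T n. 0 < T \<Longrightarrow> prob (B T n) \<le> (p / (2 * real T)) ^ 4"
      "\<And>T n \<omega>. 0 < T \<Longrightarrow> \<omega> \<in> space M - B T n \<Longrightarrow> mistake_bound c p T < n \<Longrightarrow>
         mistakes c X nn T \<omega> \<noteq> n"
    using events_excluding_mistake_counts[OF nn_NN p True] by blast
  define bad where "bad = (\<Union>T\<in>{0<..}. \<Union>n\<le>T. B T n)"
  have "bad \<in> events" "prob bad \<le> p"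
    using B(1,2) p True unfolding bad_def by (auto intro!: prob_UN_triangle_le)
  then have good_prob: "1 - p \<le> prob (space M - bad)"
    by (simp add: prob_compl)
  have bounded: "ennreal (mistakes c X nn T \<omega>) \<le> mistake_bound c p T"
    if "\<omega> \<in> space M - bad" for \<omega> T
  proof (rule ccontr)
    assume "\<not> ennreal (mistakes c X nn T \<omega>) \<le> mistake_bound c p T"
    then have above: "mistake_bound c p T < mistakes c X nn T \<omega>"
      by (simp add: ennreal_of_nat_eq_real_of_nat)
    then have T: "0 < T"
      using mistakes_le[of c X nn T \<omega>] by (cases T) auto
    have "B T (mistakes c X nn T \<omega>) \<subseteq> (\<Union>n\<le>T. B T n)"
      using mistakes_le by (intro UN_upper) simp
    also have "\<dots> \<subseteq> bad"
      unfolding bad_def using T by (intro UN_upper) simp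
    finally have "\<omega> \<in> space M - B T (mistakes c X nn T \<omega>)"
      using that by blast
    then show False
      using B(3)[OF T _ above] by blast
  qed
  show ?thesis
  proof (intro bexI[of _ "space M - bad"] conjI ballI allI)
    fix \<omega> T
    assume "\<omega> \<in> space M - bad"
    then show "ennreal (mistakes c X nn T \<omega>) \<le> min (ennreal T) (mistake_bound c p T)"
      using mistakes_le by (intro min.boundedI bounded ennreal_leI) simp_all
  qed (use \<open>bad \<in> events\<close> good_prob in auto)
qed (intro bexI[of _ "{}"], auto)

end

theorem theorem7:
  fixes \<nu> :: "'a::metric_space measure"
    and c :: "'a \<Rightarrow> 'b"
    and \<epsilon> :: "real \<Rightarrow> real"
    and M :: "'w measure"
    and X :: "nat \<Rightarrow> 'w \<Rightarrow> 'a"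
    and K :: "nat \<Rightarrow> (nat \<Rightarrow> 'a) \<Rightarrow> 'a measure"
    and nn :: "nat \<Rightarrow> 'w \<Rightarrow> nat"
    and p :: real
  assumes separable: "separable_space (euclidean :: 'a topology)"
    and nu_borel: "sets \<nu> = sets borel"
    and nu_finite: "finite_measure \<nu>"
    and boundary_null: "boundary c \<in> null_sets \<nu>"
    and eps_range: "\<And>\<delta>. \<delta> \<ge> 0 \<Longrightarrow> 0 \<le> \<epsilon> \<delta> \<and> \<epsilon> \<delta> \<le> 1"
    and eps_dominated: "(\<epsilon> \<longlongrightarrow> 0) (at_right 0)"
    and M_prob: "prob_space M"
    and X_meas: "\<And>t. X t \<in> measurable M borel"
    and K_meas: "\<And>t. K t \<in> measurable (PiM {..<t} (\<lambda>_. borel)) (subprob_algebra borel)"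
    and K_prob: "\<And>t h. h \<in> space (PiM {..<t} (\<lambda>_. borel)) \<Longrightarrow> prob_space (K t h)"
    and K_smooth: "\<And>t h A. h \<in> space (PiM {..<t} (\<lambda>_. borel)) \<Longrightarrow> A \<in> sets borel \<Longrightarrow>
                      measure (K t h) A \<le> \<epsilon> (measure \<nu> A)"
    and X_law: "\<And>t A B. A \<in> sets borel \<Longrightarrow> B \<in> sets (PiM {..<t} (\<lambda>_. borel)) \<Longrightarrow>
                   measure M {\<omega> \<in> space M. X t \<omega> \<in> A \<and> history X t \<omega> \<in> B}
                   = (\<integral>\<omega>. indicator B (history X t \<omega>) * measure (K t (history X t \<omega>)) A \<partial>M)"
    and nn_NN: "\<And>t \<omega>. 0 < t \<Longrightarrow> \<omega> \<in> space M \<Longrightarrow>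
                   nn t \<omega> < t \<and> (\<forall>\<tau><t. dist (X t \<omega>) (X (nn t \<omega>) \<omega>) \<le> dist (X t \<omega>) (X \<tau> \<omega>))"
    and p_pos: "p > 0"
  shows "\<exists>E \<in> sets M. measure M E \<ge> 1 - p \<and>
           (\<forall>\<omega>\<in>E. \<forall>T::nat.
              ennreal (real (mistakes c X nn T \<omega>))
              \<le> min (ennreal (real T))
                    (INF V\<in>sets borel. ennreal_of_enat (N_ML c V)
                        + ennreal (real T * \<epsilon> (measure \<nu> (UNIV - V)))
                        + ennreal (sqrt (2 * real T * ln (2 * real T / p)))))"
proof -
  interpret smooth_adversary M \<nu> \<epsilon> X K
  proof (rule smooth_adversary.intro[OF M_prob], intro smooth_adversary_axioms.intro)
    show "\<And>\<delta>. 0 \<le> \<delta> \<Longrightarrow> 0 \<le> \<epsilon> \<delta>"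
      using eps_range by blast
  qed (fact X_meas K_smooth X_law)+
  show ?thesis
    using nn_mistake_bound[OF nn_NN p_pos] unfolding mistake_bound_def .
qed

end
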